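(* Assume $t\ge 2$, fix $(i,j)\in[d']\times[t]$ and $n\in[t]\setminus\{j\}$. The $\binom{d+2}{3}$ linear polynomials \[ L_{\mathcal K}=|\operatorname{Perm}(\mathcal K)|\,y^{[i]}_j(\mathcal K)-\sum_{\substack{\mathcal A\cup\{b\}=\mathcal K\\ |\mathcal A|=2}}|\operatorname{Perm}(\mathcal A)|\,y^{[i]}_{n,j}(\mathcal A,b),\qquad \mathcal K\in\operatorname{Mult}_3([d]), \] all belong to the vanishing ideal $J$ of the attention variety and are linearly independent.
   Context: Setup: $Q,K\in\mathbb R^{a\times d}$, $V=(v_{ik})\in\mathbb R^{d'\times d}$, $W=(Q,K,V)$, $A=K^\top Q$, $\varphi_W(X)=VX(X^\top AX)$ for $X=(x_{kn})\in\mathbb R^{d\times t}$. $\operatorname{Mult}_r([d])$ is the set of size-$r$ multisets on $[d]$; $\operatorname{Perm}(\mathcal M)$ the set of distinct orderings of a multiset. $c^{[i]}_j(\mathcal K)$ and $c^{[i]}_{n,j}(\mathcal A,b)$ are the coefficients of $\prod_{u\in\mathcal K}x_{uj}$ and $(\prod_{u\in\mathcal A}x_{un})x_{bj}$ in $\varphi_W(X)[i,j]$; the scaled coefficients are $y^{[i]}_j(\mathcal K)=c^{[i]}_j(\mathcal K)/|\operatorname{Perm}(\mathcal K)|$, $y^{[i]}_{n,j}(\mathcal A,b)=c^{[i]}_{n,j}(\mathcal A,b)/|\operatorname{Perm}(\mathcal A)|$. The map $\mu$ sends $W$ to the array of scaled coefficients, viewed as values of ambient coordinates with the same names; the attention variety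 is the Zariski closure of $\operatorname{im}\mu$ and $J$ its vanishing ideal. The sum in $L_{\mathcal K}$ runs over distinct decompositions of $\mathcal K$ into a size-2 multiset $\mathcal A$ and a singleton $\{b\}$. *)

theory Defs
  imports Main "HOL-Library.Poly_Mapping" "HOL-Combinatorics.Multiset_Permutations"
begin

type_synonym 'v mpoly = "('v \<Rightarrow>\<^sub>0 nat) \<Rightarrow>\<^sub>0 real"

definition mp_var :: "'v \<Rightarrow> 'v mpoly" where
  "mp_var v = Poly_Mapping.single (Poly_Mapping.single v 1) 1"

definition mp_const :: "real \<Rightarrow> 'v mpoly" where
  "mp_const c = Poly_Mapping.single 0 c"

definition mp_smult :: "real \<Rightarrow> 'v mpoly \<Rightarrow> 'v mpoly" where
  "mp_smult c f = Poly_Mapping.map (\<lambda>x. c * x) f"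

definition mp_vars :: "'v mpoly \<Rightarrow> 'v set" where
  "mp_vars f = \<Union> (Poly_Mapping.keys ` Poly_Mapping.keys f)"

definition mp_eval :: "'v mpoly \<Rightarrow> ('v \<Rightarrow> real) \<Rightarrow> real" where
  "mp_eval f p = (\<Sum>m\<in>Poly_Mapping.keys f.
      Poly_Mapping.lookup f m * (\<Prod>v\<in>Poly_Mapping.keys m. p v ^ Poly_Mapping.lookup m v))"

definition Mult :: "nat \<Rightarrow> nat \<Rightarrow> nat multiset set" where
  "Mult r d = {M. set_mset M \<subseteq> {1..d} \<and> size M = r}"

definition nPerm :: "nat multiset \<Rightarrow> nat" where
  "nPerm M = card (permutations_of_multiset M)"

text \<open>The polynomial phi_W(X)[i,j] in the entries x_{kn} of X (variable (k,n)),
  where A = K^T Q and phi_W(X) = V X (X^T A X).  Matrices are functions on indices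
  (1-based); Q,K are a x d, V is d' x d, X is d x t.\<close>
definition Amat :: "nat \<Rightarrow> nat \<Rightarrow> (nat \<Rightarrow> nat \<Rightarrow> real) \<Rightarrow> (nat \<Rightarrow> nat \<Rightarrow> real)
    \<Rightarrow> nat \<Rightarrow> nat \<Rightarrow> real" where
  "Amat a d Q K p q = (\<Sum>l\<in>{1..a}. K l p * Q l q)"

definition xmon :: "nat \<Rightarrow> nat \<Rightarrow> (nat \<times> nat) \<Rightarrow>\<^sub>0 nat" where
  "xmon k m = Poly_Mapping.single (k, m) 1"

definition phi_poly :: "nat \<Rightarrow> nat \<Rightarrow> nat \<Rightarrow> (nat \<Rightarrow> nat \<Rightarrow> real) \<Rightarrow> (nat \<Rightarrow> nat \<Rightarrow> real)
    \<Rightarrow> (nat \<Rightarrow> nat \<Rightarrow> real) \<Rightarrow> nat \<Rightarrow> nat \<Rightarrow> (nat \<times> nat) mpoly" where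
  "phi_poly a d t Q K V i j =
     (\<Sum>k\<in>{1..d}. \<Sum>m\<in>{1..t}. \<Sum>p\<in>{1..d}. \<Sum>q\<in>{1..d}.
        Poly_Mapping.single (xmon k m + xmon p m + xmon q j) (V i k * Amat a d Q K p q))"

definition colmon :: "nat multiset \<Rightarrow> nat \<Rightarrow> (nat \<times> nat) \<Rightarrow>\<^sub>0 nat" where
  "colmon M n = sum_mset (image_mset (\<lambda>u. xmon u n) M)"

definition coefC :: "nat \<Rightarrow> nat \<Rightarrow> nat \<Rightarrow> (nat \<Rightarrow> nat \<Rightarrow> real) \<Rightarrow> (nat \<Rightarrow> nat \<Rightarrow> real)
    \<Rightarrow> (nat \<Rightarrow> nat \<Rightarrow> real) \<Rightarrow> nat \<Rightarrow> nat \<Rightarrow> nat multiset \<Rightarrow> real" where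
  "coefC a d t Q K V i j M = Poly_Mapping.lookup (phi_poly a d t Q K V i j) (colmon M j)"

definition coefM :: "nat \<Rightarrow> nat \<Rightarrow> nat \<Rightarrow> (nat \<Rightarrow> nat \<Rightarrow> real) \<Rightarrow> (nat \<Rightarrow> nat \<Rightarrow> real)
    \<Rightarrow> (nat \<Rightarrow> nat \<Rightarrow> real) \<Rightarrow> nat \<Rightarrow> nat \<Rightarrow> nat \<Rightarrow> nat multiset \<Rightarrow> nat \<Rightarrow> real" where
  "coefM a d t Q K V i n j M b =
     Poly_Mapping.lookup (phi_poly a d t Q K V i j) (colmon M n + xmon b j)"

text \<open>Ambient coordinates: YC i j K is y^{[i]}_j(K), YM i n j A b is y^{[i]}_{n,j}(A,b).\<close>
datatype coord = YC nat nat "nat multiset" | YM nat nat nat "nat multiset" nat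

definition Coords :: "nat \<Rightarrow> nat \<Rightarrow> nat \<Rightarrow> coord set" where
  "Coords d d' t =
     {YC i j M | i j M. i \<in> {1..d'} \<and> j \<in> {1..t} \<and> M \<in> Mult 3 d} \<union>
     {YM i n j M b | i n j M b. i \<in> {1..d'} \<and> n \<in> {1..t} \<and> j \<in> {1..t} \<and> n \<noteq> j
        \<and> M \<in> Mult 2 d \<and> b \<in> {1..d}}"

definition mu :: "nat \<Rightarrow> nat \<Rightarrow> nat \<Rightarrow> nat \<Rightarrow> (nat \<Rightarrow> nat \<Rightarrow> real) \<Rightarrow> (nat \<Rightarrow> nat \<Rightarrow> real)
    \<Rightarrow> (nat \<Rightarrow> nat \<Rightarrow> real) \<Rightarrow> coord \<Rightarrow> real" where
  "mu a d d' t Q K V c =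
     (if c \<in> Coords d d' t then
        (case c of
           YC i j M \<Rightarrow> coefC a d t Q K V i j M / real (nPerm M)
         | YM i n j M b \<Rightarrow> coefM a d t Q K V i n j M b / real (nPerm M))
      else 0)"

definition ambient :: "coord set \<Rightarrow> (coord \<Rightarrow> real) set" where
  "ambient C = {p. \<forall>c. c \<notin> C \<longrightarrow> p c = 0}"

definition vanishing_ideal :: "coord set \<Rightarrow> (coord \<Rightarrow> real) set \<Rightarrow> coord mpoly set" where
  "vanishing_ideal C S = {f. mp_vars f \<subseteq> C \<and> (\<forall>p\<in>S. mp_eval f p = 0)}"

definition zariski_closure :: "coord set \<Rightarrow> (coord \<Rightarrow> real) set \<Rightarrow> (coord \<Rightarrow> real) set" where
  "zariski_closure C S =
     {p \<in> ambient C. \<forall>f\<in>vanishing_ideal C S. mp_eval f p = 0}"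

definition attention_variety :: "nat \<Rightarrow> nat \<Rightarrow> nat \<Rightarrow> nat \<Rightarrow> (coord \<Rightarrow> real) set" where
  "attention_variety a d d' t =
     zariski_closure (Coords d d' t) (range (\<lambda>(Q, K, V). mu a d d' t Q K V))"

definition J_ideal :: "nat \<Rightarrow> nat \<Rightarrow> nat \<Rightarrow> nat \<Rightarrow> coord mpoly set" where
  "J_ideal a d d' t = vanishing_ideal (Coords d d' t) (attention_variety a d d' t)"

text \<open>The linear polynomial L_K; decompositions K = A + {b} with |A| = 2 are indexed
  by the distinct elements b of K, with A = K - {b}.\<close>
definition L_poly :: "nat \<Rightarrow> nat \<Rightarrow> nat \<Rightarrow> nat multiset \<Rightarrow> coord mpoly" where
  "L_poly i n j M =
     mp_smult (real (nPerm M)) (mp_var (YC i j M)) -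
     (\<Sum>b\<in>set_mset M. mp_smult (real (nPerm (M - {#b#}))) (mp_var (YM i n j (M - {#b#}) b)))"

end

theory Submission imports Defs begin

text \<open>Expanding phi_W(X)[i,j] = sum over k, m, p, q of v_ik A_pq x_km x_pm x_qj, the monomial
  prod_{u in K} x_uj collects exactly the terms with m = j and {k,p,q} = K, while
  (prod_{u in A} x_un) x_bj, for n \<noteq> j, collects those with m = n, q = b and {k,p} = A.
  Summing the latter over all splittings K = A + {b} regroups them into the former, so every
  L_K vanishes on the image of mu and hence on its Zariski closure. The L_K are linearly
  independent because the coordinate y_j(K) occurs in L_K and in no other of them.\<close>

definition monomial_value :: "('v \<Rightarrow>\<^sub>0 nat) \<Rightarrow> ('v \<Rightarrow> real) \<Rightarrow> real" where
  "monomial_value m p = (\<Prod>v\<in>Poly_Mapping.keys m. p v ^ Poly_Mapping.lookup m v)"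

lemma mp_eval_eq_sum_superset:
  assumes "finite S" "Poly_Mapping.keys f \<subseteq> S"
  shows "mp_eval f p = (\<Sum>m\<in>S. Poly_Mapping.lookup f m * monomial_value m p)"
  unfolding mp_eval_def monomial_value_def
  by (rule sum.mono_neutral_left) (use assms in \<open>auto simp: in_keys_iff\<close>)

lemma mp_eval_add: "mp_eval (f + g) p = mp_eval f p + mp_eval g p"
proof -
  let ?S = "Poly_Mapping.keys f \<union> Poly_Mapping.keys g"
  have "finite ?S" by simp
  then have "mp_eval (f + g) p = (\<Sum>m\<in>?S. Poly_Mapping.lookup (f + g) m * monomial_value m p)"
    and "mp_eval f p = (\<Sum>m\<in>?S. Poly_Mapping.lookup f m * monomial_value m p)"
    and "mp_eval g p = (\<Sum>m\<in>?S. Poly_Mapping.lookup g m * monomial_value m p)"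
    using keys_add[of f g] by (auto intro!: mp_eval_eq_sum_superset)
  then show ?thesis
    by (simp add: lookup_add distrib_right sum.distrib)
qed

lemma mp_eval_diff: "mp_eval (f - g) p = mp_eval f p - mp_eval g p"
  using mp_eval_add[of "f - g" g p] by simp

lemma mp_eval_sum: "mp_eval (sum f A) p = (\<Sum>x\<in>A. mp_eval (f x) p)"
  by (induction A rule: infinite_finite_induct) (simp_all add: mp_eval_add mp_eval_def[of 0])

lemma lookup_mp_smult: "Poly_Mapping.lookup (mp_smult c f) m = c * Poly_Mapping.lookup f m"
  by (simp add: mp_smult_def map.rep_eq when_def)

lemma keys_mp_smult_subset: "Poly_Mapping.keys (mp_smult c f) \<subseteq> Poly_Mapping.keys f"
  by (auto simp: in_keys_iff lookup_mp_smult)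

lemma mp_eval_smult: "mp_eval (mp_smult c f) p = c * mp_eval f p"
proof -
  have "mp_eval (mp_smult c f) p
      = (\<Sum>m\<in>Poly_Mapping.keys f. Poly_Mapping.lookup (mp_smult c f) m * monomial_value m p)"
    by (rule mp_eval_eq_sum_superset) (simp_all add: keys_mp_smult_subset)
  also have "\<dots> = c * mp_eval f p"
    using mp_eval_eq_sum_superset[of "Poly_Mapping.keys f" f p]
    by (simp add: lookup_mp_smult sum_distrib_left mult.assoc)
  finally show ?thesis .
qed

lemma mp_eval_var: "mp_eval (mp_var v) p = p v"
  by (simp add: mp_eval_def mp_var_def)

lemma mp_vars_diff: "mp_vars (f - g) \<subseteq> mp_vars f \<union> mp_vars g"
  unfolding mp_vars_def using keys_diff[of f g] by blast

lemma mp_vars_sum: "mp_vars (sum f A) \<subseteq> (\<Union>x\<in>A. mp_vars (f x))"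
  unfolding mp_vars_def using keys_sum[of f A] by blast

lemma mp_vars_smult: "mp_vars (mp_smult c f) \<subseteq> mp_vars f"
  unfolding mp_vars_def using keys_mp_smult_subset[of c f] by blast

lemma mp_vars_var: "mp_vars (mp_var v) = {v}"
  by (simp add: mp_vars_def mp_var_def)

lemma lookup_mp_var_single:
  "Poly_Mapping.lookup (mp_var v) (Poly_Mapping.single w 1) = (if v = w then 1 else 0)"
  unfolding mp_var_def lookup_single when_def
  by (metis lookup_single_eq lookup_single_not_eq zero_neq_one)

definition monom_of_mset :: "'a multiset \<Rightarrow> 'a \<Rightarrow>\<^sub>0 nat" where
  "monom_of_mset N = (\<Sum>x\<in>#N. Poly_Mapping.single x 1)"

lemma lookup_monom_of_mset: "Poly_Mapping.lookup (monom_of_mset N) x = count N x"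
  unfolding monom_of_mset_def by (induction N) (auto simp: lookup_add lookup_single when_def)

lemma monom_of_mset_eq_iff: "monom_of_mset N = monom_of_mset N' \<longleftrightarrow> N = N'"
  by (metis lookup_monom_of_mset multiset_eqI)

lemma monom_of_mset_add: "monom_of_mset (N + N') = monom_of_mset N + monom_of_mset N'"
  unfolding monom_of_mset_def by simp

lemma xmon_eq_monom_of_mset: "xmon k m = monom_of_mset {#(k, m)#}"
  unfolding monom_of_mset_def xmon_def by simp

lemma colmon_eq_monom_of_mset: "colmon M n = monom_of_mset (image_mset (\<lambda>u. (u, n)) M)"
  unfolding monom_of_mset_def colmon_def xmon_def by (simp add: multiset.map_comp comp_def)

lemma phi_term_monomial:
  "xmon k m + xmon p m + xmon q j = monom_of_mset {#(k, m), (p, m), (q, j)#}"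
  by (simp add: xmon_eq_monom_of_mset monom_of_mset_add[symmetric] add_mset_commute)

lemma phi_term_monomial_eq_colmon_iff:
  "xmon k m + xmon p m + xmon q j = colmon M j \<longleftrightarrow> m = j \<and> {#k, p, q#} = M"
proof -
  have "{#(k, m), (p, m), (q, j)#} = image_mset (\<lambda>u. (u, j)) M \<longleftrightarrow> m = j \<and> {#k, p, q#} = M"
  proof
    assume eq: "{#(k, m), (p, m), (q, j)#} = image_mset (\<lambda>u. (u, j)) M"
    then have "(k, m) \<in># image_mset (\<lambda>u. (u, j)) M" by (metis union_single_eq_member)
    moreover have "image_mset fst {#(k, m), (p, m), (q, j)#} = M"
      by (simp add: eq multiset.map_comp comp_def)
    ultimately show "m = j \<and> {#k, p, q#} = M" by auto
  qed auto
  then show ?thesis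
    unfolding phi_term_monomial colmon_eq_monom_of_mset monom_of_mset_eq_iff .
qed

lemma phi_term_monomial_eq_colmon_xmon_iff:
  assumes "n \<noteq> j"
  shows "xmon k m + xmon p m + xmon q j = colmon A n + xmon b j \<longleftrightarrow> m = n \<and> q = b \<and> {#k, p#} = A"
proof -
  have "{#(k, m), (p, m), (q, j)#} = add_mset (b, j) (image_mset (\<lambda>u. (u, n)) A)
      \<longleftrightarrow> m = n \<and> q = b \<and> {#k, p#} = A"
  proof
    assume eq: "{#(k, m), (p, m), (q, j)#} = add_mset (b, j) (image_mset (\<lambda>u. (u, n)) A)"
    \<comment> \<open>Only one factor of the monomial lies in column j, namely x_{bj}.\<close>
    have "filter_mset (\<lambda>x. snd x = j) {#(k, m), (p, m), (q, j)#} = {#(b, j)#}"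
      unfolding eq using assms by (simp add: filter_mset_image_mset)
    then have qb: "q = b"
      by (auto split: if_splits)
    then have rest: "{#(k, m), (p, m)#} = image_mset (\<lambda>u. (u, n)) A"
      using eq by (simp add: add_mset_commute)
    then have "(k, m) \<in># image_mset (\<lambda>u. (u, n)) A" by (metis union_single_eq_member)
    moreover have "image_mset fst {#(k, m), (p, m)#} = A"
      by (simp add: rest multiset.map_comp comp_def)
    ultimately show "m = n \<and> q = b \<and> {#k, p#} = A" using qb by auto
  qed (auto simp: add_mset_commute)
  then show ?thesis
    unfolding phi_term_monomial colmon_eq_monom_of_mset xmon_eq_monom_of_mset
      monom_of_mset_add[symmetric] monom_of_mset_eq_iff by (simp add: add_mset_commute)
qed

lemma sum_eq_single:
  fixes g :: "'a \<Rightarrow> 'b::comm_monoid_add"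
  assumes "finite T" "a \<in> T" "\<And>x. x \<in> T \<Longrightarrow> x \<noteq> a \<Longrightarrow> g x = 0"
  shows "sum g T = g a"
  using sum.mono_neutral_right[of T "{a}" g] assms by auto

lemma coefC_eq_sum:
  assumes "j \<in> {1..t}"
  shows "coefC a d t Q K V i j M = (\<Sum>k\<in>{1..d}. \<Sum>p\<in>{1..d}. \<Sum>q\<in>{1..d}.
            if {#k, p, q#} = M then V i k * Amat a d Q K p q else 0)"
proof -
  have "coefC a d t Q K V i j M = (\<Sum>k\<in>{1..d}. \<Sum>m\<in>{1..t}. \<Sum>p\<in>{1..d}. \<Sum>q\<in>{1..d}.
            if m = j \<and> {#k, p, q#} = M then V i k * Amat a d Q K p q else 0)"
    unfolding coefC_def phi_poly_def lookup_sum lookup_single phi_term_monomial_eq_colmon_iff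
    by (simp add: when_def)
  then show ?thesis
    using assms by (simp add: sum_eq_single[where a = j])
qed

lemma coefM_eq_sum:
  assumes "n \<in> {1..t}" "n \<noteq> j" "b \<in> {1..d}"
  shows "coefM a d t Q K V i n j A b = (\<Sum>k\<in>{1..d}. \<Sum>p\<in>{1..d}.
            if {#k, p#} = A then V i k * Amat a d Q K p b else 0)"
proof -
  have "coefM a d t Q K V i n j A b = (\<Sum>k\<in>{1..d}. \<Sum>m\<in>{1..t}. \<Sum>p\<in>{1..d}. \<Sum>q\<in>{1..d}.
            if m = n \<and> q = b \<and> {#k, p#} = A then V i k * Amat a d Q K p q else 0)"
    unfolding coefM_def phi_poly_def lookup_sum lookup_single
      phi_term_monomial_eq_colmon_xmon_iff[OF assms(2)]
    by (simp add: when_def)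
  then show ?thesis
    using assms by (simp add: sum_eq_single[where a = n] sum_eq_single[where a = b])
qed

lemma sum_add_mset_eq_conv_remove:
  assumes "finite S" "set_mset M \<subseteq> S"
  shows "(\<Sum>q\<in>S. if add_mset q N = M then f q else 0)
       = (\<Sum>b\<in>set_mset M. if N = M - {#b#} then f b else 0)"
proof -
  have "(\<Sum>q\<in>S. if add_mset q N = M then f q else 0)
      = (\<Sum>q\<in>set_mset M. if add_mset q N = M then f q else 0)"
    by (rule sum.mono_neutral_right) (use assms in auto)
  also have "\<dots> = (\<Sum>b\<in>set_mset M. if N = M - {#b#} then f b else 0)"
    by (intro sum.cong refl) (metis add_mset_remove_trivial insert_DiffM)
  finally show ?thesis .
qed

lemma coefC_eq_sum_coefM:
  assumes "M \<in> Mult 3 d" "j \<in> {1..t}" "n \<in> {1..t}" "n \<noteq> j"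
  shows "coefC a d t Q K V i j M = (\<Sum>b\<in>set_mset M. coefM a d t Q K V i n j (M - {#b#}) b)"
proof -
  let ?f = "\<lambda>k p q. V i k * Amat a d Q K p q"
  have M_range: "set_mset M \<subseteq> {1..d}"
    using assms(1) by (simp add: Mult_def)
  have "(\<Sum>b\<in>set_mset M. coefM a d t Q K V i n j (M - {#b#}) b)
      = (\<Sum>b\<in>set_mset M. \<Sum>k\<in>{1..d}. \<Sum>p\<in>{1..d}. if {#k, p#} = M - {#b#} then ?f k p b else 0)"
    using assms M_range by (intro sum.cong refl, subst coefM_eq_sum) auto
  also have "\<dots> = (\<Sum>k\<in>{1..d}. \<Sum>p\<in>{1..d}. \<Sum>b\<in>set_mset M.
                     if {#k, p#} = M - {#b#} then ?f k p b else 0)"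
    by (subst sum.swap) (simp add: sum.swap[where A = "set_mset M"])
  also have "\<dots> = (\<Sum>k\<in>{1..d}. \<Sum>p\<in>{1..d}. \<Sum>q\<in>{1..d}.
                     if add_mset q {#k, p#} = M then ?f k p q else 0)"
    using M_range by (simp add: sum_add_mset_eq_conv_remove)
  also have "\<dots> = coefC a d t Q K V i j M"
    using assms by (simp add: coefC_eq_sum add_mset_commute)
  finally show ?thesis ..
qed

lemma Mult_eq_multisets_of_size: "Mult r d = multisets_of_size {1..d} r"
  by (simp add: Mult_def multisets_of_size_def)

lemma finite_Mult: "finite (Mult r d)"
  by (auto simp: Mult_eq_multisets_of_size)

lemma card_Mult: "card (Mult r d) = (d + r - 1) choose r"
  by (simp add: Mult_eq_multisets_of_size card_multisets_of_size)

lemma nPerm_pos: "nPerm M > 0"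
  by (simp add: nPerm_def card_gt_0_iff)

lemma mp_eval_L_poly:
  "mp_eval (L_poly i n j M) p = real (nPerm M) * p (YC i j M)
     - (\<Sum>b\<in>set_mset M. real (nPerm (M - {#b#})) * p (YM i n j (M - {#b#}) b))"
  unfolding L_poly_def mp_eval_diff mp_eval_sum mp_eval_smult mp_eval_var ..

lemma mp_vars_smult_var: "mp_vars (mp_smult c (mp_var v)) \<subseteq> {v}"
  using mp_vars_smult mp_vars_var by metis

lemma mp_vars_sum_smult_var:
  "mp_vars (\<Sum>x\<in>A. mp_smult (c x) (mp_var (v x))) \<subseteq> v ` A"
  by (rule subset_trans[OF mp_vars_sum]) (use mp_vars_smult_var in fastforce)

lemma mp_vars_L_poly:
  "mp_vars (L_poly i n j M) \<subseteq> insert (YC i j M) ((\<lambda>b. YM i n j (M - {#b#}) b) ` set_mset M)"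
  unfolding L_poly_def
  using mp_vars_smult_var[of "real (nPerm M)" "YC i j M"]
    mp_vars_sum_smult_var[of "\<lambda>b. real (nPerm (M - {#b#}))" "\<lambda>b. YM i n j (M - {#b#}) b" "set_mset M"]
  by (intro subset_trans[OF mp_vars_diff]) blast

lemma lookup_L_poly_YC:
  "Poly_Mapping.lookup (L_poly i n j M) (Poly_Mapping.single (YC i j M') 1)
     = (if M = M' then real (nPerm M) else 0)"
  unfolding L_poly_def lookup_minus lookup_sum lookup_mp_smult lookup_mp_var_single by simp

lemma L_poly_coords:
  assumes "M \<in> Mult 3 d" "i \<in> {1..d'}" "j \<in> {1..t}" "n \<in> {1..t}" "n \<noteq> j"
  shows "YC i j M \<in> Coords d d' t"
    and "b \<in># M \<Longrightarrow> YM i n j (M - {#b#}) b \<in> Coords d d' t"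
    and "mp_vars (L_poly i n j M) \<subseteq> Coords d d' t"
proof -
  have YM: "YM i n j (M - {#b#}) b \<in> Coords d d' t" if "b \<in># M" for b
  proof -
    have "M - {#b#} \<in> Mult 2 d"
      using assms(1) that by (auto simp: Mult_def size_Diff_singleton dest: in_diffD)
    then show ?thesis
      using assms that unfolding Coords_def Mult_def by blast
  qed
  show "YC i j M \<in> Coords d d' t"
    using assms by (auto simp: Coords_def)
  with YM show "b \<in># M \<Longrightarrow> YM i n j (M - {#b#}) b \<in> Coords d d' t"
    and "mp_vars (L_poly i n j M) \<subseteq> Coords d d' t"
    using mp_vars_L_poly[of i n j M] by blast+
qed

lemma vanishing_ideal_zariski_closure:
  assumes "f \<in> vanishing_ideal C S"
  shows "f \<in> vanishing_ideal C (zariski_closure C S)"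
  using assms unfolding vanishing_ideal_def zariski_closure_def by blast

lemma L_poly_vanishes_on_mu:
  assumes "M \<in> Mult 3 d" "i \<in> {1..d'}" "j \<in> {1..t}" "n \<in> {1..t}" "n \<noteq> j"
  shows "mp_eval (L_poly i n j M) (mu a d d' t Q K V) = 0"
proof -
  have "real (nPerm M) * mu a d d' t Q K V (YC i j M) = coefC a d t Q K V i j M"
    using L_poly_coords(1)[OF assms] nPerm_pos[of M] by (simp add: mu_def)
  moreover have "real (nPerm (M - {#b#})) * mu a d d' t Q K V (YM i n j (M - {#b#}) b)
      = coefM a d t Q K V i n j (M - {#b#}) b" if "b \<in># M" for b
    using L_poly_coords(2)[OF assms that] nPerm_pos[of "M - {#b#}"] by (simp add: mu_def)
  ultimately show ?thesis
    using coefC_eq_sum_coefM[OF assms(1,3-5)] by (simp add: mp_eval_L_poly)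
qed

lemma L_poly_in_J_ideal:
  assumes "M \<in> Mult 3 d" "i \<in> {1..d'}" "j \<in> {1..t}" "n \<in> {1..t}" "n \<noteq> j"
  shows "L_poly i n j M \<in> J_ideal a d d' t"
proof -
  have "L_poly i n j M \<in> vanishing_ideal (Coords d d' t) (range (\<lambda>(Q, K, V). mu a d d' t Q K V))"
    using L_poly_coords(3)[OF assms] L_poly_vanishes_on_mu[OF assms]
    by (auto simp: vanishing_ideal_def)
  then show ?thesis
    unfolding J_ideal_def attention_variety_def by (rule vanishing_ideal_zariski_closure)
qed

lemma L_poly_linear_independent:
  assumes "(\<Sum>M\<in>Mult 3 d. mp_smult (c M) (L_poly i n j M)) = 0" "M' \<in> Mult 3 d"
  shows "c M' = 0"
proof -
  have "0 = Poly_Mapping.lookup (\<Sum>M\<in>Mult 3 d. mp_smult (c M) (L_poly i n j M))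
              (Poly_Mapping.single (YC i j M') 1)"
    by (simp only: assms(1) lookup_zero)
  also have "\<dots> = (\<Sum>M\<in>Mult 3 d. c M * (if M = M' then real (nPerm M) else 0))"
    unfolding lookup_sum lookup_mp_smult lookup_L_poly_YC ..
  also have "\<dots> = c M' * real (nPerm M')"
    using assms(2) finite_Mult by (subst sum_eq_single[where a = M']) auto
  finally show ?thesis
    using nPerm_pos[of M'] by simp
qed

theorem mainTheorem5:
  fixes a d d' t i j n :: nat
  assumes "t \<ge> 2" and "i \<in> {1..d'}" and "j \<in> {1..t}" and "n \<in> {1..t}" and "n \<noteq> j"
  shows "card (Mult 3 d) = (d + 2) choose 3
    \<and> (\<forall>M\<in>Mult 3 d. L_poly i n j M \<in> J_ideal a d d' t)
    \<and> (\<forall>c :: nat multiset \<Rightarrow> real.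
          (\<Sum>M\<in>Mult 3 d. mp_smult (c M) (L_poly i n j M)) = 0
          \<longrightarrow> (\<forall>M\<in>Mult 3 d. c M = 0))"
  using card_Mult[of 3 d] L_poly_in_J_ideal[OF _ assms(2-5)] L_poly_linear_independent
  by (simp add: numeral_eq_Suc)

end
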